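(* Every sizeable graph has at least $23$ vertices.
   Context: A simplicial graph $\Gamma$ is sizeable if it is bipartite on vertex sets $A$ and $B$, contains no cycle of length $4$, and there are partitions $A=A_0\sqcup A_1$, $B=B_0\sqcup B_1$ such that each induced subgraph $\Gamma(A_s\sqcup B_t)$, $s,t\in\{0,1\}$, is connected. *)

theory Defs
  imports Main
begin

definition simple_graph :: "'a set \<Rightarrow> ('a \<Rightarrow> 'a \<Rightarrow> bool) \<Rightarrow> bool" where
  "simple_graph V E \<longleftrightarrow>
     (\<forall>x y. E x y \<longrightarrow> x \<in> V \<and> y \<in> V) \<and>
     (\<forall>x y. E x y \<longrightarrow> E y x) \<and>
     (\<forall>x. \<not> E x x)"

definition induced_connected :: "('a \<Rightarrow> 'a \<Rightarrow> bool) \<Rightarrow> 'a set \<Rightarrow> bool" where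
  "induced_connected E S \<longleftrightarrow>
     S \<noteq> {} \<and>
     (\<forall>x\<in>S. \<forall>y\<in>S. (\<lambda>u v. u \<in> S \<and> v \<in> S \<and> E u v)\<^sup>*\<^sup>* x y)"

definition bipartite_on :: "'a set \<Rightarrow> ('a \<Rightarrow> 'a \<Rightarrow> bool) \<Rightarrow> 'a set \<Rightarrow> 'a set \<Rightarrow> bool" where
  "bipartite_on V E A B \<longleftrightarrow>
     A \<inter> B = {} \<and> A \<union> B = V \<and>
     (\<forall>x y. E x y \<longrightarrow> (x \<in> A \<and> y \<in> B) \<or> (x \<in> B \<and> y \<in> A))"

definition has_4_cycle :: "('a \<Rightarrow> 'a \<Rightarrow> bool) \<Rightarrow> bool" where
  "has_4_cycle E \<longleftrightarrow>
     (\<exists>a b c d. distinct [a, b, c, d] \<and> E a b \<and> E b c \<and> E c d \<and> E d a)"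

definition sizeable :: "'a set \<Rightarrow> ('a \<Rightarrow> 'a \<Rightarrow> bool) \<Rightarrow> bool" where
  "sizeable V E \<longleftrightarrow>
     simple_graph V E \<and>
     (\<exists>A B. bipartite_on V E A B \<and> \<not> has_4_cycle E \<and>
        (\<exists>A0 A1 B0 B1.
           A0 \<noteq> {} \<and> A1 \<noteq> {} \<and> B0 \<noteq> {} \<and> B1 \<noteq> {} \<and>
           A0 \<inter> A1 = {} \<and> A0 \<union> A1 = A \<and>
           B0 \<inter> B1 = {} \<and> B0 \<union> B1 = B \<and>
           induced_connected E (A0 \<union> B0) \<and> induced_connected E (A0 \<union> B1) \<and>
           induced_connected E (A1 \<union> B0) \<and> induced_connected E (A1 \<union> B1)))"

end

theory Submission
  imports Defs "HOL-Analysis.Convex"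
begin

text \<open>
  Let e be the number of edges. Each of the four connected subgraphs on A_s \<union> B_t has at
  least |A_s| + |B_t| - 1 edges, so e \<ge> 2|V| - 4. As there is no 4-cycle, the neighbourhoods of
  the vertices of B form a partial linear space on A (two of them share at most one point) and
  vice versa; counting pairs of points and Cauchy-Schwarz give e^2 \<le> |B| (|A| (|A| - 1) + e) and
  the symmetric bound. For |V| \<le> 22 these force |A| = |B| = 11, and counting pairs across
  A = A0 \<union> A1 gives |A0| |A1| \<ge> 29, so the parts of A have sizes 5 and 6.
  In that case every counting inequality is nearly tight: the numbers of neighbourhoods meeting
  A0 and A1 in i and j points are determined up to three possibilities, and the two
  neighbourhoods meeting A0 in three points lead to a contradiction in each of them.
\<close>

section \<open>Partial linear spaces\<close>

definition partial_linear_space :: "'b set \<Rightarrow> ('b \<Rightarrow> 'a set) \<Rightarrow> bool" where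
  "partial_linear_space L F \<longleftrightarrow>
     (\<forall>b\<in>L. \<forall>b'\<in>L. \<forall>s t. s \<noteq> t \<longrightarrow> s \<in> F b \<inter> F b' \<longrightarrow> t \<in> F b \<inter> F b' \<longrightarrow> b = b')"

lemma partial_linear_spaceD:
  assumes "partial_linear_space L F" "b \<in> L" "b' \<in> L" "s \<noteq> t"
    "s \<in> F b" "t \<in> F b" "s \<in> F b'" "t \<in> F b'"
  shows "b = b'"
  using assms unfolding partial_linear_space_def by blast

definition blocks_through :: "'b set \<Rightarrow> ('b \<Rightarrow> 'a set) \<Rightarrow> 'a \<Rightarrow> 'b set" where
  "blocks_through L F z = {b\<in>L. z \<in> F b}"

lemma finite_blocks_through [simp]: "finite L \<Longrightarrow> finite (blocks_through L F z)"
  by (simp add: blocks_through_def)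

lemma sum_blocks_through_swap:
  assumes "finite S" "finite L"
  shows "(\<Sum>z\<in>S. \<Sum>b\<in>blocks_through L F z. g z b) = (\<Sum>b\<in>L. \<Sum>z\<in>F b \<inter> S. g z b)"
  unfolding blocks_through_def Int_def
  using sum.swap_restrict[OF assms, of g "\<lambda>z b. z \<in> F b"] by (simp add: conj_commute)

lemma sum_blocks_through_eq:
  assumes "finite S" "finite L"
  shows "(\<Sum>z\<in>S. \<Sum>b\<in>blocks_through L F z. g b) = (\<Sum>b\<in>L. card (F b \<inter> S) * g b)"
  using sum_blocks_through_swap[OF assms, of "\<lambda>_. g"] by simp

text \<open>For the blocks b through z the sets F b \<inter> S - {z} are pairwise disjoint.\<close>
lemma sum_blocks_through_le:
  assumes "partial_linear_space L F" "finite L" "finite S"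
  shows "(\<Sum>b\<in>blocks_through L F z. card (F b \<inter> S - {z})) \<le> card (S - {z})"
proof -
  have "(\<Sum>b\<in>blocks_through L F z. card (F b \<inter> S - {z}))
      = card (\<Union>b\<in>blocks_through L F z. F b \<inter> S - {z})"
    using assms by (intro card_UN_disjoint[symmetric])
      (auto simp: blocks_through_def partial_linear_space_def)
  also have "\<dots> \<le> card (S - {z})"
    using assms by (intro card_mono) auto
  finally show ?thesis .
qed

lemma sum_incidences_le:
  assumes "partial_linear_space L F" "finite L" "finite S" "finite T"
  shows "(\<Sum>b\<in>L. \<Sum>z\<in>F b \<inter> T. card (F b \<inter> S - {z})) \<le> (\<Sum>z\<in>T. card (S - {z}))"
proof -
  have "(\<Sum>b\<in>L. \<Sum>z\<in>F b \<inter> T. card (F b \<inter> S - {z}))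
      = (\<Sum>z\<in>T. \<Sum>b\<in>blocks_through L F z. card (F b \<inter> S - {z}))"
    by (rule sum_blocks_through_swap[OF assms(4,2), symmetric])
  also have "\<dots> \<le> (\<Sum>z\<in>T. card (S - {z}))"
    using sum_blocks_through_le[OF assms(1-3)] by (rule sum_mono)
  finally show ?thesis .
qed

lemma sum_pairs_in_blocks_le:
  assumes "partial_linear_space L F" "finite L" "finite S"
  shows "(\<Sum>b\<in>L. card (F b \<inter> S) * (card (F b \<inter> S) - 1)) \<le> card S * (card S - 1)"
proof -
  have "card (F b \<inter> S) * (card (F b \<inter> S) - 1) = (\<Sum>z\<in>F b \<inter> S. card (F b \<inter> S - {z}))" for b
    using assms(3) by simp
  then show ?thesis
    using sum_incidences_le[OF assms assms(3)] assms(3) by simp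
qed

lemma sum_cross_pairs_in_blocks_le:
  assumes "partial_linear_space L F" "finite L" "finite S" "finite T" "S \<inter> T = {}"
  shows "(\<Sum>b\<in>L. card (F b \<inter> S) * card (F b \<inter> T)) \<le> card S * card T"
proof -
  have "F b \<inter> S - {z} = F b \<inter> S" if "z \<in> T" for b z
    using that assms(5) by blast
  then have "card (F b \<inter> S) * card (F b \<inter> T) = (\<Sum>z\<in>F b \<inter> T. card (F b \<inter> S - {z}))" for b
    by simp
  moreover have "card (S - {z}) = card S" if "z \<in> T" for z
    using that assms(5) by (metis Diff_empty Diff_insert0 disjoint_iff)
  ultimately show ?thesis
    using sum_incidences_le[OF assms(1-4)] by (simp add: mult.commute)
qed

lemma sum_squared_le_card_mult_sum_squares_nat:
  "(\<Sum>i\<in>I. f i)\<^sup>2 \<le> card I * (\<Sum>i\<in>I. (f i)\<^sup>2 :: nat)"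
proof -
  have "real ((\<Sum>i\<in>I. f i)\<^sup>2) \<le> real (card I * (\<Sum>i\<in>I. (f i)\<^sup>2))"
    using sum_squared_le_sum_of_squares[of "\<lambda>i. real (f i)" I] by (simp add: mult.commute)
  then show ?thesis
    by (simp only: of_nat_le_iff)
qed

lemma sum_blocks_squared_le:
  assumes "partial_linear_space L F" "finite L" "finite S"
  shows "(\<Sum>b\<in>L. card (F b \<inter> S))\<^sup>2 \<le> card L * (card S * (card S - 1) + (\<Sum>b\<in>L. card (F b \<inter> S)))"
proof -
  let ?c = "\<lambda>b. card (F b \<inter> S)"
  have "(?c b)\<^sup>2 = ?c b * (?c b - 1) + ?c b" for b
    by (cases "?c b") (simp_all add: power2_eq_square)
  then have "(\<Sum>b\<in>L. (?c b)\<^sup>2) = (\<Sum>b\<in>L. ?c b * (?c b - 1)) + sum ?c L"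
    by (simp add: sum.distrib)
  also have "\<dots> \<le> card S * (card S - 1) + sum ?c L"
    using sum_pairs_in_blocks_le[OF assms] by simp
  finally show ?thesis
    using sum_squared_le_card_mult_sum_squares_nat[of ?c L] le_trans mult_le_mono2 by blast
qed

definition edges_within :: "('a \<Rightarrow> 'a \<Rightarrow> bool) \<Rightarrow> 'a set \<Rightarrow> 'a set set" where
  "edges_within E T = {{u, v} | u v. u \<in> T \<and> v \<in> T \<and> E u v}"

lemma finite_edges_within: "finite T \<Longrightarrow> finite (edges_within E T)"
  by (rule finite_subset[of _ "Pow T"]) (auto simp: edges_within_def)

lemma edges_within_mono: "T \<subseteq> T' \<Longrightarrow> edges_within E T \<subseteq> edges_within E T'"
  unfolding edges_within_def by blast

lemma induced_connected_leaving_edge: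
  assumes "induced_connected E S" "T \<subseteq> S" "x \<in> T" "y \<in> S - T"
  obtains u v where "u \<in> T" "v \<in> S - T" "E u v"
proof -
  have "(\<lambda>u v. u \<in> S \<and> v \<in> S \<and> E u v)\<^sup>*\<^sup>* x y"
    using assms unfolding induced_connected_def by blast
  then have "y \<notin> T \<longrightarrow> (\<exists>u\<in>T. \<exists>v\<in>S - T. E u v)"
    by (induction rule: rtranclp_induct) (use assms(3) in blast)+
  then show ?thesis
    using assms(4) that by blast
qed

lemma induced_connected_subset_with_edges:
  assumes "finite S" "induced_connected E S" "k < card S"
  shows "\<exists>T\<subseteq>S. card T = Suc k \<and> k \<le> card (edges_within E T)"
  using assms(3)
proof (induction k)
  case 0
  obtain x where "x \<in> S"
    using assms(2) unfolding induced_connected_def by blast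
  then show ?case
    by (intro exI[of _ "{x}"]) auto
next
  case (Suc k)
  then obtain T where T: "T \<subseteq> S" "card T = Suc k" "k \<le> card (edges_within E T)"
    by auto
  have "finite T"
    using T(1) assms(1) finite_subset by blast
  obtain x where x: "x \<in> T"
    using T(2) by fastforce
  have "T \<noteq> S"
    using T(2) Suc.prems by auto
  then obtain y where "y \<in> S - T"
    using T(1) by blast
  then obtain u v where uv: "u \<in> T" "v \<in> S - T" "E u v"
    using induced_connected_leaving_edge[OF assms(2) T(1) x] by blast
  have "insert {u, v} (edges_within E T) \<subseteq> edges_within E (insert v T)"
    using edges_within_mono[of T "insert v T" E] uv unfolding edges_within_def by blast
  moreover have "{u, v} \<notin> edges_within E T"
    using uv(2) unfolding edges_within_def by (auto simp: doubleton_eq_iff)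
  ultimately have "Suc (card (edges_within E T)) \<le> card (edges_within E (insert v T))"
    using card_mono[OF finite_edges_within[of "insert v T" E]] finite_edges_within[of T E] \<open>finite T\<close>
    by (metis card_insert_disjoint finite_insert)
  moreover have "card (insert v T) = Suc (Suc k)"
    using T(2) uv(2) \<open>finite T\<close> by simp
  ultimately show ?case
    using T uv by (intro exI[of _ "insert v T"]) auto
qed

lemma induced_connected_card_edges_ge:
  assumes "finite S" "induced_connected E S"
  shows "card S - 1 \<le> card (edges_within E S)"
proof -
  have "card S > 0"
    using assms unfolding induced_connected_def by auto
  then obtain T where "T \<subseteq> S" "card T = card S" "card S - 1 \<le> card (edges_within E T)"
    using induced_connected_subset_with_edges[OF assms, of "card S - 1"] by auto
  then show ?thesis
    using assms(1) card_subset_eq[of S T] by simp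
qed

abbreviation neighbours :: "('a \<Rightarrow> 'a \<Rightarrow> bool) \<Rightarrow> 'a \<Rightarrow> 'a set" where
  "neighbours E v \<equiv> Collect (E v)"

lemma bipartite_connected_degree_sum_ge:
  assumes "simple_graph V E" "bipartite_on V E A B" "X \<subseteq> A" "Y \<subseteq> B" "finite X" "finite Y"
    and "induced_connected E (X \<union> Y)"
  shows "card X + card Y - 1 \<le> (\<Sum>b\<in>Y. card (neighbours E b \<inter> X))"
proof -
  have sym: "E u v \<Longrightarrow> E v u" for u v
    using assms(1) unfolding simple_graph_def by blast
  have across: "E u v \<Longrightarrow> u \<in> X \<union> Y \<Longrightarrow> v \<in> X \<union> Y \<Longrightarrow> u \<in> X \<and> v \<in> Y \<or> u \<in> Y \<and> v \<in> X"
    for u v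
    using assms(2-4) unfolding bipartite_on_def by blast
  have "X \<inter> Y = {}"
    using assms(2-4) unfolding bipartite_on_def by blast
  then have "card X + card Y - 1 = card (X \<union> Y) - 1"
    using assms(5,6) by (simp add: card_Un_disjoint)
  also have "\<dots> \<le> card (edges_within E (X \<union> Y))"
    using assms(5-7) by (intro induced_connected_card_edges_ge) auto
  also have "\<dots> \<le> card (\<Union>b\<in>Y. (\<lambda>a. {a, b}) ` (neighbours E b \<inter> X))"
  proof (rule card_mono)
    show "finite (\<Union>b\<in>Y. (\<lambda>a. {a, b}) ` (neighbours E b \<inter> X))"
      using assms(5,6) by auto
    show "edges_within E (X \<union> Y) \<subseteq> (\<Union>b\<in>Y. (\<lambda>a. {a, b}) ` (neighbours E b \<inter> X))"
      unfolding edges_within_def using sym across by (fastforce simp: insert_commute)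
  qed
  also have "\<dots> \<le> (\<Sum>b\<in>Y. card ((\<lambda>a. {a, b}) ` (neighbours E b \<inter> X)))"
    by (rule card_UN_le) (use assms(6) in auto)
  also have "\<dots> \<le> (\<Sum>b\<in>Y. card (neighbours E b \<inter> X))"
    by (rule sum_mono) (rule card_image_le, use assms(5) in auto)
  finally show ?thesis .
qed

lemma bipartite_connected_neighbour:
  assumes "bipartite_on V E A B" "X \<subseteq> A" "Y \<subseteq> B" "X \<noteq> {}"
    and "induced_connected E (X \<union> Y)" "b \<in> Y"
  shows "neighbours E b \<inter> X \<noteq> {}"
proof -
  obtain a where "a \<in> X"
    using assms(4) by blast
  moreover have "a \<noteq> b"
    using assms(1-3,6) \<open>a \<in> X\<close> unfolding bipartite_on_def by blast
  ultimately obtain v where "v \<in> (X \<union> Y) - {b}" "E b v"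
    using induced_connected_leaving_edge[OF assms(5), of "{b}" b a] assms(6) by blast
  moreover have "v \<in> A"
    using \<open>E b v\<close> assms(1,3,6) unfolding bipartite_on_def by blast
  ultimately show ?thesis
    using assms(1,3) unfolding bipartite_on_def by blast
qed

lemma C4_free_partial_linear_space:
  assumes "simple_graph V E" "\<not> has_4_cycle E"
  shows "partial_linear_space L (neighbours E)"
  unfolding partial_linear_space_def
proof (intro ballI allI impI)
  fix b b' s t
  assume "b \<in> L" "b' \<in> L" "s \<noteq> t" "s \<in> neighbours E b \<inter> neighbours E b'"
    "t \<in> neighbours E b \<inter> neighbours E b'"
  then have "E b s" "E s b'" "E b' t" "E t b" "s \<noteq> t" "b \<noteq> s" "b \<noteq> t" "b' \<noteq> s" "b' \<noteq> t"
    using assms(1) unfolding simple_graph_def by auto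
  show "b = b'"
  proof (rule ccontr)
    assume "b \<noteq> b'"
    then have "distinct [b, s, b', t]"
      using \<open>s \<noteq> t\<close> \<open>b \<noteq> s\<close> \<open>b \<noteq> t\<close> \<open>b' \<noteq> s\<close> \<open>b' \<noteq> t\<close> by simp
    then show False
      using assms(2) \<open>E b s\<close> \<open>E s b'\<close> \<open>E b' t\<close> \<open>E t b\<close> unfolding has_4_cycle_def by blast
  qed
qed

lemma eq_bound_if_sum_ge:
  fixes f :: "'a \<Rightarrow> nat"
  assumes "finite S" "\<And>z. z \<in> S \<Longrightarrow> f z \<le> k" "k * card S \<le> (\<Sum>z\<in>S. f z)" "z \<in> S"
  shows "f z = k"
proof (rule ccontr)
  assume "f z \<noteq> k"
  with assms have "(\<Sum>z\<in>S. f z) < (\<Sum>z\<in>S. k)"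
    by (intro sum_strict_mono_ex1) (auto simp: order.strict_iff_order)
  with assms(3) show False
    by (simp add: mult.commute)
qed

lemma six_mult_add_le: "6 * (x + y) \<le> x * (x - 1) + y * (y - 1) + 2 * (x * y) + (12::nat)"
proof -
  have "0 \<le> (int x + int y - 3) * (int x + int y - 4)"
    by (cases "int x + int y \<le> 3") (simp_all add: mult_nonpos_nonpos)
  moreover have "int (x * (x - 1)) = int x * int x - int x" "int (y * (y - 1)) = int y * int y - int y"
    by (cases x; cases y; simp add: algebra_simps)+
  ultimately have "int (6 * (x + y)) \<le> int (x * (x - 1) + y * (y - 1) + 2 * (x * y) + 12)"
    unfolding of_nat_add by (simp add: algebra_simps)
  then show ?thesis
    by (simp only: of_nat_le_iff)
qed

lemma mult_pred_eq: "x * (x - 1) = (x - 1) * (x - 2) + 2 * (x - 1)" for x :: nat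
  by (cases x) (simp_all add: algebra_simps)

lemma pred_mult_pred_eq: "1 \<le> x \<Longrightarrow> 1 \<le> y \<Longrightarrow> x * y + 1 = (x - 1) * (y - 1) + x + y" for x y :: nat
  by (cases x; cases y) (simp_all add: algebra_simps)

lemma sum_by_value_pairs:
  assumes "finite L" "\<And>b. b \<in> L \<Longrightarrow> x b \<in> I" "\<And>b. b \<in> L \<Longrightarrow> y b \<in> J" "finite I" "finite J"
  shows "(\<Sum>b\<in>L. g (x b) (y b)) = (\<Sum>i\<in>I. \<Sum>j\<in>J. card {b\<in>L. x b = i \<and> y b = j} * g i j)"
proof -
  have "(\<Sum>b\<in>L. g (x b) (y b)) = (\<Sum>t\<in>I \<times> J. \<Sum>b | b \<in> L \<and> (x b, y b) = t. g (x b) (y b))"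
    using assms by (intro sum.group[symmetric]) auto
  also have "\<dots> = (\<Sum>t\<in>I \<times> J. card {b\<in>L. x b = fst t \<and> y b = snd t} * g (fst t) (snd t))"
    by (intro sum.cong refl) (auto simp: prod_eq_iff)
  finally show ?thesis
    by (simp add: sum.cartesian_product split_def)
qed

lemma pred_mult_pred2_le_if_sum_le:
  fixes f :: "'b \<Rightarrow> nat"
  assumes "finite L" "b \<in> L" "(\<Sum>b\<in>L. f b * (f b - 1)) \<le> 2 * (\<Sum>b\<in>L. f b - 1) + m"
  shows "(f b - 1) * (f b - 2) \<le> m"
proof -
  have "(\<Sum>b\<in>L. f b * (f b - 1)) = (\<Sum>b\<in>L. (f b - 1) * (f b - 2)) + 2 * (\<Sum>b\<in>L. f b - 1)"
    by (subst mult_pred_eq) (simp add: sum.distrib sum_distrib_left)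
  then have "(\<Sum>b\<in>L. (f b - 1) * (f b - 2)) \<le> m"
    using assms(3) by linarith
  then show ?thesis
    using member_le_sum[of b L "\<lambda>b. (f b - 1) * (f b - 2)"] assms(1,2) by simp
qed

text \<open>n_ij stands for the number of blocks of type (i, j) in the extremal configuration below.\<close>
lemma tight_type_counts:
  fixes n11 n12 n13 n14 n21 n22 n31 :: nat
  assumes "n11 + n12 + n13 + n14 + n21 + n22 + n31 = 11"
    and "n21 + n22 + 2 * n31 = 8" and "n12 + 2 * n13 + 3 * n14 + n22 = 10"
    and "n31 \<le> 2" and "n12 + 3 * n13 + 6 * n14 + n22 \<le> 15" and "n22 \<le> 1"
  shows "n11 = 0 \<and> n31 = 2 \<and>
    (n12 = 0 \<and> n13 = 5 \<and> n14 = 0 \<and> n21 = 4 \<and> n22 = 0 \<or>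
     n12 = 1 \<and> n13 = 4 \<and> n14 = 0 \<and> n21 = 3 \<and> n22 = 1 \<or>
     n12 = 2 \<and> n13 = 2 \<and> n14 = 1 \<and> n21 = 3 \<and> n22 = 1)"
proof -
  have "n14 = 0 \<or> n14 = 1 \<or> n14 = 2" "n13 = 0 \<or> n13 = 1 \<or> n13 = 2 \<or> n13 = 3 \<or> n13 = 4 \<or> n13 = 5"
      "n31 = 0 \<or> n31 = 1 \<or> n31 = 2" "n22 = 0 \<or> n22 = 1"
    using assms(4-6) by linarith+
  then show ?thesis
    using assms(1-3,5) by (elim disjE) (simp_all, linarith?)
qed

lemma square_le_mult_add_mono:
  fixes e c q X :: nat
  assumes "e * e \<le> q * (X + e)" "c \<le> e" "q \<le> c"
  shows "c * c \<le> q * (X + c)"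
proof -
  have "0 \<le> (int e - int c) * (int e + int c - int q)"
    using assms by (intro mult_nonneg_nonneg) auto
  then have "int c * int c - int q * int c \<le> int e * int e - int q * int e"
    by (simp add: algebra_simps)
  moreover have "int e * int e \<le> int q * (int X + int e)"
    using assms(1) by (metis of_nat_add of_nat_le_iff of_nat_mult)
  ultimately have "int c * int c \<le> int q * (int X + int c)"
    by (simp add: algebra_simps)
  then show ?thesis
    by (metis of_nat_add of_nat_le_iff of_nat_mult)
qed

lemma eleven_eleven_if_square_bounds:
  fixes p q :: nat
  assumes "2 \<le> p" "2 \<le> q" "p + q \<le> 22"
    and "(2 * (p + q) - 4)\<^sup>2 \<le> q * (p * (p - 1) + (2 * (p + q) - 4))"
    and "(2 * (p + q) - 4)\<^sup>2 \<le> p * (q * (q - 1) + (2 * (p + q) - 4))"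
  shows "p = 11 \<and> q = 11"
proof -
  have range: "2 \<le> x \<Longrightarrow> x \<le> 20 \<Longrightarrow> x = 2 \<or> x = 3 \<or> x = 4 \<or> x = 5 \<or> x = 6 \<or>
      x = 7 \<or> x = 8 \<or> x = 9 \<or> x = 10 \<or> x = 11 \<or> x = 12 \<or> x = 13 \<or> x = 14 \<or> x = 15 \<or>
      x = 16 \<or> x = 17 \<or> x = 18 \<or> x = 19 \<or> x = 20" for x :: nat
    by presburger
  have "p \<le> 20" "q \<le> 20"
    using assms(1-3) by linarith+
  then show ?thesis
    using range[OF assms(1) \<open>p \<le> 20\<close>] range[OF assms(2) \<open>q \<le> 20\<close>] assms(3-5)
    by (elim disjE) simp_all
qed

lemma five_six_if_mult_ge_29:
  fixes a b :: nat
  assumes "a + b = 11" "29 \<le> a * b"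
  shows "a = 5 \<and> b = 6 \<or> a = 6 \<and> b = 5"
proof -
  have "a = 0 \<or> a = 1 \<or> a = 2 \<or> a = 3 \<or> a = 4 \<or> a = 5 \<or> a = 6 \<or> a = 7 \<or> a = 8 \<or>
      a = 9 \<or> a = 10 \<or> a = 11"
    using assms(1) by presburger
  then show ?thesis
    using assms by (elim disjE) auto
qed

section \<open>Two-sided incidence structures\<close>

locale two_sided_incidence =
  fixes P Q :: "'a set" and L :: "'b set" and F :: "'b \<Rightarrow> 'a set"
  assumes finite_P [simp]: "finite P" and finite_Q [simp]: "finite Q" and finite_L [simp]: "finite L"
    and disjoint: "P \<inter> Q = {}"
    and partial_linear: "partial_linear_space L F"
    and meets_P: "b \<in> L \<Longrightarrow> F b \<inter> P \<noteq> {}"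
    and meets_Q: "b \<in> L \<Longrightarrow> F b \<inter> Q \<noteq> {}"
begin

definition dP :: "'b \<Rightarrow> nat" where "dP b = card (F b \<inter> P)"
definition dQ :: "'b \<Rightarrow> nat" where "dQ b = card (F b \<inter> Q)"

abbreviation through :: "'a \<Rightarrow> 'b set" where "through z \<equiv> blocks_through L F z"

lemma dP_pos: "b \<in> L \<Longrightarrow> 1 \<le> dP b"
  using meets_P by (simp add: dP_def Suc_le_eq card_gt_0_iff)

lemma dQ_pos: "b \<in> L \<Longrightarrow> 1 \<le> dQ b"
  using meets_Q by (simp add: dQ_def Suc_le_eq card_gt_0_iff)

lemma card_le_sum_dP: "R \<subseteq> L \<Longrightarrow> card R \<le> sum dP R"
  unfolding card_eq_sum using dP_pos by (intro sum_mono) auto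

lemma sum_through_dP_P: "v \<in> P \<Longrightarrow> (\<Sum>b\<in>through v. dP b - 1) \<le> card P - 1"
  using sum_blocks_through_le[OF partial_linear finite_L finite_P, of v]
  by (simp add: dP_def blocks_through_def)

lemma sum_through_dQ_P: "v \<in> P \<Longrightarrow> (\<Sum>b\<in>through v. dQ b) \<le> card Q"
proof -
  assume "v \<in> P"
  then have "F b \<inter> Q - {v} = F b \<inter> Q" "Q - {v} = Q" for b
    using disjoint by auto
  then show ?thesis
    using sum_blocks_through_le[OF partial_linear finite_L finite_Q, of v] by (simp add: dQ_def)
qed

lemma sum_through_dP_Q: "z \<in> Q \<Longrightarrow> (\<Sum>b\<in>through z. dP b) \<le> card P"
proof -
  assume "z \<in> Q"
  then have "F b \<inter> P - {z} = F b \<inter> P" "P - {z} = P" for b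
    using disjoint by auto
  then show ?thesis
    using sum_blocks_through_le[OF partial_linear finite_L finite_P, of z] by (simp add: dP_def)
qed

lemma sum_through_dQ_Q: "z \<in> Q \<Longrightarrow> (\<Sum>b\<in>through z. dQ b - 1) \<le> card Q - 1"
  using sum_blocks_through_le[OF partial_linear finite_L finite_Q, of z]
  by (simp add: dQ_def blocks_through_def)

lemma sum_dP_pairs_le: "(\<Sum>b\<in>L. dP b * (dP b - 1)) \<le> card P * (card P - 1)"
  unfolding dP_def by (rule sum_pairs_in_blocks_le[OF partial_linear]) simp_all

lemma sum_dQ_pairs_le: "(\<Sum>b\<in>L. dQ b * (dQ b - 1)) \<le> card Q * (card Q - 1)"
  unfolding dQ_def by (rule sum_pairs_in_blocks_le[OF partial_linear]) simp_all

lemma sum_dP_dQ_le: "(\<Sum>b\<in>L. dP b * dQ b) \<le> card P * card Q"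
  unfolding dP_def dQ_def by (rule sum_cross_pairs_in_blocks_le[OF partial_linear _ _ _ disjoint]) simp_all

lemma through_P_dQ_if_tight:
  assumes "(\<Sum>b\<in>L. dP b * dQ b) = card P * card Q" "v \<in> P"
  shows "(\<Sum>b\<in>through v. dQ b) = card Q"
proof (rule eq_bound_if_sum_ge[OF finite_P sum_through_dQ_P _ assms(2)])
  show "card Q * card P \<le> (\<Sum>v\<in>P. \<Sum>b\<in>through v. dQ b)"
    using assms(1) by (simp add: sum_blocks_through_eq flip: dP_def)
qed

lemma through_Q_dP_if_tight:
  assumes "(\<Sum>b\<in>L. dP b * dQ b) = card P * card Q" "z \<in> Q"
  shows "(\<Sum>b\<in>through z. dP b) = card P"
proof (rule eq_bound_if_sum_ge[OF finite_Q sum_through_dP_Q _ assms(2)])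
  show "card P * card Q \<le> (\<Sum>z\<in>Q. \<Sum>b\<in>through z. dP b)"
    using assms(1) by (simp add: sum_blocks_through_eq mult.commute flip: dQ_def)
qed

lemma through_Q_dQ_if_tight:
  assumes "(\<Sum>b\<in>L. dQ b * (dQ b - 1)) = card Q * (card Q - 1)" "z \<in> Q"
  shows "(\<Sum>b\<in>through z. dQ b - 1) = card Q - 1"
proof (rule eq_bound_if_sum_ge[OF finite_Q sum_through_dQ_Q _ assms(2)])
  show "(card Q - 1) * card Q \<le> (\<Sum>z\<in>Q. \<Sum>b\<in>through z. dQ b - 1)"
    using assms(1) by (simp add: sum_blocks_through_eq mult.commute flip: dQ_def)
qed

lemma Q_part_eq_complement:
  assumes "c \<in> L" "b \<in> L" "c \<noteq> b" "q \<in> F c" "q \<in> F b" "q \<in> Q" "dQ c + dQ b = card Q + 1"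
  shows "F c \<inter> Q - {q} = Q - F b"
proof (rule card_subset_eq)
  show "F c \<inter> Q - {q} \<subseteq> Q - F b"
    using partial_linear_spaceD[OF partial_linear assms(1,2)] assms(3-5) by blast
  have "card (Q - F b) = card Q - dQ b"
    by (simp add: dQ_def card_Diff_subset_Int Int_commute)
  then show "card (F c \<inter> Q - {q}) = card (Q - F b)"
    using assms(4,6,7) by (simp add: dQ_def)
qed simp

end

section \<open>The extremal configuration\<close>

text \<open>
  In the application P and Q are the parts of A of sizes 5 and 6, and the blocks are the
  neighbourhoods of the 11 vertices of B. The type of a block b is the pair (dP b, dQ b).
\<close>
locale tight_configuration = two_sided_incidence +
  assumes card_P: "card P = 5" and card_Q: "card Q = 6" and card_L: "card L = 11"
    and sum_P_ge: "19 \<le> (\<Sum>b\<in>L. card (F b \<inter> P))" and sum_Q_ge: "21 \<le> (\<Sum>b\<in>L. card (F b \<inter> Q))"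
begin

lemma sum_dP_pairs_le_20: "(\<Sum>b\<in>L. dP b * (dP b - 1)) \<le> 20"
  using sum_dP_pairs_le card_P by simp

lemma sum_dQ_pairs_le_30: "(\<Sum>b\<in>L. dQ b * (dQ b - 1)) \<le> 30"
  using sum_dQ_pairs_le card_Q by simp

lemma sum_dP_dQ_le_30: "(\<Sum>b\<in>L. dP b * dQ b) \<le> 30"
  using sum_dP_dQ_le card_P card_Q by simp

lemma sum_dP_eq: "sum dP L = 19" and sum_dQ_eq: "sum dQ L = 21"
proof -
  have "(\<Sum>b\<in>L. 6 * (dP b + dQ b))
      \<le> (\<Sum>b\<in>L. dP b * (dP b - 1) + dQ b * (dQ b - 1) + 2 * (dP b * dQ b) + 12)"
    by (intro sum_mono six_mult_add_le)
  then have "6 * (sum dP L + sum dQ L) \<le> 242"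
    using sum_dP_pairs_le_20 sum_dQ_pairs_le_30 sum_dP_dQ_le_30
    by (simp add: sum.distrib card_L flip: sum_distrib_left)
  moreover have "19 \<le> sum dP L" "21 \<le> sum dQ L"
    using sum_P_ge sum_Q_ge by (simp_all add: dP_def dQ_def)
  ultimately show "sum dP L = 19" "sum dQ L = 21"
    by simp_all
qed

lemma sum_pred_dP: "(\<Sum>b\<in>L. dP b - 1) = 8"
  using sum_subtractf_nat[of L "\<lambda>_. 1" dP] dP_pos sum_dP_eq card_L by simp

lemma sum_pred_dQ: "(\<Sum>b\<in>L. dQ b - 1) = 10"
  using sum_subtractf_nat[of L "\<lambda>_. 1" dQ] dQ_pos sum_dQ_eq card_L by simp

lemma dP_le_3: "b \<in> L \<Longrightarrow> dP b \<le> 3"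
proof (rule ccontr)
  assume "b \<in> L" "\<not> dP b \<le> 3"
  then have "3 * 2 \<le> (dP b - 1) * (dP b - 2)"
    by (intro mult_le_mono) auto
  moreover have "(dP b - 1) * (dP b - 2) \<le> 4"
    using pred_mult_pred2_le_if_sum_le[OF finite_L \<open>b \<in> L\<close>] sum_dP_pairs_le_20 sum_pred_dP by simp
  ultimately show False
    by simp
qed

lemma dQ_le_4: "b \<in> L \<Longrightarrow> dQ b \<le> 4"
proof (rule ccontr)
  assume "b \<in> L" "\<not> dQ b \<le> 4"
  then have "4 * 3 \<le> (dQ b - 1) * (dQ b - 2)"
    by (intro mult_le_mono) auto
  moreover have "(dQ b - 1) * (dQ b - 2) \<le> 10"
    using pred_mult_pred2_le_if_sum_le[OF finite_L \<open>b \<in> L\<close>] sum_dQ_pairs_le_30 sum_pred_dQ by simp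
  ultimately show False
    by simp
qed

lemma sum_pred_dP_pred_dQ_le_1: "(\<Sum>b\<in>L. (dP b - 1) * (dQ b - 1)) \<le> 1"
proof -
  have "(\<Sum>b\<in>L. dP b * dQ b + 1) = (\<Sum>b\<in>L. (dP b - 1) * (dQ b - 1) + dP b + dQ b)"
    using dP_pos dQ_pos by (intro sum.cong refl pred_mult_pred_eq)
  then have "(\<Sum>b\<in>L. dP b * dQ b) + card L = (\<Sum>b\<in>L. (dP b - 1) * (dQ b - 1)) + sum dP L + sum dQ L"
    by (simp only: sum.distrib sum_constant mult_1_right of_nat_id)
  then show ?thesis
    using sum_dP_dQ_le_30 sum_dP_eq sum_dQ_eq card_L by linarith
qed

definition type_count :: "nat \<Rightarrow> nat \<Rightarrow> nat" where
  "type_count i j = card {b\<in>L. dP b = i \<and> dQ b = j}"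

lemma dP_range: "b \<in> L \<Longrightarrow> dP b \<in> {1, 2, 3}"
  using dP_pos[of b] dP_le_3[of b] by (auto simp: le_Suc_eq eval_nat_numeral)

lemma dQ_range: "b \<in> L \<Longrightarrow> dQ b \<in> {1, 2, 3, 4}"
  using dQ_pos[of b] dQ_le_4[of b] by (auto simp: le_Suc_eq eval_nat_numeral)

lemma type_count_pos: "b \<in> L \<Longrightarrow> type_count (dP b) (dQ b) \<noteq> 0"
  by (auto simp: type_count_def)

lemma sum_by_types:
  "(\<Sum>b\<in>L. g (dP b) (dQ b)) = (\<Sum>i\<in>{1, 2, 3}. \<Sum>j\<in>{1, 2, 3, 4}. type_count i j * g i j)"
  unfolding type_count_def
  by (rule sum_by_value_pairs[OF finite_L dP_range dQ_range]) simp_all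

lemma type_profiles:
  "type_count 1 1 = 0 \<and> type_count 2 3 = 0 \<and> type_count 2 4 = 0 \<and>
   type_count 3 2 = 0 \<and> type_count 3 3 = 0 \<and> type_count 3 4 = 0 \<and> type_count 3 1 = 2 \<and>
   (type_count 1 2 = 0 \<and> type_count 1 3 = 5 \<and> type_count 1 4 = 0 \<and>
      type_count 2 1 = 4 \<and> type_count 2 2 = 0 \<or>
    type_count 1 2 = 1 \<and> type_count 1 3 = 4 \<and> type_count 1 4 = 0 \<and>
      type_count 2 1 = 3 \<and> type_count 2 2 = 1 \<or>
    type_count 1 2 = 2 \<and> type_count 1 3 = 2 \<and> type_count 1 4 = 1 \<and>
      type_count 2 1 = 3 \<and> type_count 2 2 = 1)"
proof -
  have "type_count 2 2 + 2 * type_count 2 3 + 3 * type_count 2 4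
      + 2 * type_count 3 2 + 4 * type_count 3 3 + 6 * type_count 3 4 \<le> 1"
    using sum_by_types[of "\<lambda>i j. (i - 1) * (j - 1)"] sum_pred_dP_pred_dQ_le_1 by simp
  then have zero: "type_count 2 3 = 0" "type_count 2 4 = 0" "type_count 3 2 = 0"
      "type_count 3 3 = 0" "type_count 3 4 = 0" and "type_count 2 2 \<le> 1"
    by linarith+
  have "type_count 1 1 + type_count 1 2 + type_count 1 3 + type_count 1 4
      + type_count 2 1 + type_count 2 2 + type_count 3 1 = 11"
    using sum_by_types[of "\<lambda>_ _. 1"] card_L zero by simp
  moreover have sum_P: "type_count 2 1 + type_count 2 2 + 2 * type_count 3 1 = 8"
    using sum_by_types[of "\<lambda>i _. i - 1"] sum_pred_dP zero by simp
  moreover have "type_count 1 2 + 2 * type_count 1 3 + 3 * type_count 1 4 + type_count 2 2 = 10"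
    using sum_by_types[of "\<lambda>_ j. j - 1"] sum_pred_dQ zero by simp
  moreover have "type_count 3 1 \<le> 2"
    using sum_by_types[of "\<lambda>i _. i * (i - 1)"] sum_dP_pairs_le_20 zero sum_P by simp
  moreover have "type_count 1 2 + 3 * type_count 1 3 + 6 * type_count 1 4 + type_count 2 2 \<le> 15"
    using sum_by_types[of "\<lambda>_ j. j * (j - 1)"] sum_dQ_pairs_le_30 zero by simp
  ultimately show ?thesis
    using tight_type_counts[OF _ _ _ _ _ \<open>type_count 2 2 \<le> 1\<close>] zero by blast
qed

lemma type_count_zero:
  "type_count 1 1 = 0" "type_count 2 3 = 0" "type_count 2 4 = 0"
  "type_count 3 2 = 0" "type_count 3 3 = 0" "type_count 3 4 = 0"
  using type_profiles by simp_all

lemma type_count_3_1: "type_count 3 1 = 2"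
  using type_profiles by simp

lemma dQ_le_2_if_dP_ge_2:
  assumes "b \<in> L" "2 \<le> dP b"
  shows "dQ b \<le> 2"
proof (rule ccontr)
  assume "\<not> dQ b \<le> 2"
  then have "dP b \<in> {2, 3}" "dQ b \<in> {3, 4}"
    using assms dP_range[of b] dQ_range[of b] by auto
  then have "type_count (dP b) (dQ b) = 0"
    using type_count_zero by auto
  with type_count_pos assms(1) show False
    by blast
qed

lemma dQ_ge_2_if_dP_1:
  assumes "b \<in> L" "dP b = 1"
  shows "2 \<le> dQ b"
proof (rule ccontr)
  assume "\<not> 2 \<le> dQ b"
  then have "dQ b = 1"
    using assms(1) dQ_pos[of b] by simp
  then have "type_count (dP b) (dQ b) = 0"
    using type_count_zero assms(2) by simp
  with type_count_pos assms(1) show False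
    by blast
qed

lemma dQ_2_or_3_if_dP_1:
  assumes "type_count 1 4 = 0" "b \<in> L" "dP b = 1"
  shows "dQ b = 2 \<or> dQ b = 3"
proof -
  have "dQ b \<noteq> 4"
  proof
    assume "dQ b = 4"
    then have "type_count (dP b) (dQ b) = 0"
      using assms(1,3) by simp
    with type_count_pos assms(2) show False
      by blast
  qed
  then show ?thesis
    using dQ_ge_2_if_dP_1[OF assms(2,3)] dQ_le_4[OF assms(2)] by linarith
qed

lemma blocks_of_type_3_1:
  obtains b1 b2 v q1 q2 where "b1 \<in> L" "b2 \<in> L" "b1 \<noteq> b2"
    "dP b1 = 3" "dQ b1 = 1" "dP b2 = 3" "dQ b2 = 1"
    "v \<in> P" "v \<in> F b1" "v \<in> F b2" "F b1 \<inter> Q = {q1}" "F b2 \<inter> Q = {q2}" "q1 \<noteq> q2"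
proof -
  obtain b1 b2 where b: "{b\<in>L. dP b = 3 \<and> dQ b = 1} = {b1, b2}" "b1 \<noteq> b2"
    using type_count_3_1 unfolding type_count_def by (auto simp: card_2_iff)
  then have b1: "b1 \<in> L" "dP b1 = 3" "dQ b1 = 1" and b2: "b2 \<in> L" "dP b2 = 3" "dQ b2 = 1"
    by blast+
  have "card (F b1 \<inter> P \<union> F b2 \<inter> P) \<le> card P"
    by (intro card_mono) auto
  moreover have "card (F b1 \<inter> P \<union> F b2 \<inter> P) + card (F b1 \<inter> P \<inter> (F b2 \<inter> P)) = 6"
    using card_Un_Int[of "F b1 \<inter> P" "F b2 \<inter> P"] b1 b2 by (simp add: dP_def)
  ultimately have "F b1 \<inter> P \<inter> (F b2 \<inter> P) \<noteq> {}"
    using card_P by auto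
  then obtain v where v: "v \<in> P" "v \<in> F b1" "v \<in> F b2"
    by blast
  obtain q1 q2 where q: "F b1 \<inter> Q = {q1}" "F b2 \<inter> Q = {q2}"
    using b1(3) b2(3) by (auto simp: dQ_def card_1_singleton_iff)
  have "q1 \<noteq> q2"
  proof
    assume "q1 = q2"
    then have "b1 = b2"
      using partial_linear_spaceD[OF partial_linear b1(1) b2(1), of v q1] v q disjoint by blast
    with b(2) show False ..
  qed
  with that b b1 b2 v q show ?thesis
    by blast
qed

lemma no_tight_profile_with_odd_dQ:
  assumes "\<And>b. b \<in> L \<Longrightarrow> odd (dQ b)" "(\<Sum>b\<in>L. dQ b * (dQ b - 1)) = 30"
  shows False
proof -
  obtain z where "z \<in> Q"
    using card_Q by fastforce
  then have "(\<Sum>b\<in>through z. dQ b - 1) = 5"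
    using through_Q_dQ_if_tight assms(2) card_Q by simp
  moreover have "even (\<Sum>b\<in>through z. dQ b - 1)"
    using assms(1) by (intro dvd_sum) (auto simp: blocks_through_def)
  ultimately show False
    by simp
qed

text \<open>
  Through the common point v of the two blocks of type (3, 1) all other blocks meet P only in v,
  and their values of dQ, each 2 or 3, add up to 4.
\<close>
lemma no_tight_profile_with_one_1_2_block:
  assumes "(\<Sum>b\<in>L. dP b * dQ b) = 30" "type_count 1 2 \<le> 1" "type_count 1 4 = 0"
  shows False
proof -
  obtain b1 b2 v where b: "b1 \<in> L" "b2 \<in> L" "b1 \<noteq> b2" "dP b1 = 3" "dQ b1 = 1" "dP b2 = 3" "dQ b2 = 1"
    and v: "v \<in> P" "v \<in> F b1" "v \<in> F b2"
    using blocks_of_type_3_1 by metis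
  define R where "R = through v - {b1, b2}"
  have R_L: "R \<subseteq> L" and finite_R: "finite R"
    by (auto simp: R_def blocks_through_def)
  have "{b1, b2} \<subseteq> through v"
    using b v by (auto simp: blocks_through_def)
  then have split: "sum f (through v) = sum f R + f b1 + f b2" for f :: "'b \<Rightarrow> nat"
    using sum.subset_diff[of "{b1, b2}" "through v" f] b(3) unfolding R_def by simp
  have "(\<Sum>b\<in>R. dP b - 1) = 0"
    using sum_through_dP_P[OF v(1)] split[of "\<lambda>b. dP b - 1"] card_P b by simp
  then have dP_R: "dP b = 1" if "b \<in> R" for b
    using that finite_R dP_pos[of b] R_L by (force simp: sum_eq_0_iff)
  then have dQ_R: "dQ b = 2 \<or> dQ b = 3" if "b \<in> R" for b
    using dQ_2_or_3_if_dP_1[OF assms(3)] that R_L by blast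
  define R2 where "R2 = {b\<in>R. dQ b = 2}"
  have R2_le: "card R2 \<le> type_count 1 2"
    unfolding type_count_def R2_def
    using dP_R R_L by (intro card_mono) auto
  moreover have "sum dQ R = sum dQ (R - R2) + sum dQ R2"
    by (rule sum.subset_diff) (use finite_R in \<open>auto simp: R2_def\<close>)
  moreover have "sum dQ (R - R2) = sum (\<lambda>_. 3) (R - R2)"
    using dQ_R by (intro sum.cong) (auto simp: R2_def)
  ultimately have "sum dQ R = 2 * card R2 + 3 * card (R - R2)"
    by (simp add: R2_def)
  moreover have "sum dQ R = 4"
    using through_P_dQ_if_tight[OF _ v(1)] assms(1) card_P card_Q split[of dQ] b by simp
  ultimately have "2 * card R2 + 3 * card (R - R2) = 4" "card R2 \<le> 1"
    using R2_le assms(2) by simp_all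
  then show False
    by presburger
qed

text \<open>
  The other blocks through q meet P in 2 points and Q in 5 further points altogether; as a block
  meeting P twice meets Q at most twice, they must be one block of type (1, 4) and one of type (1, 3).
\<close>
lemma point_of_3_1_block_on_1_3_and_1_4_blocks:
  assumes "(\<Sum>b\<in>L. dP b * dQ b) = 30" "(\<Sum>b\<in>L. dQ b * (dQ b - 1)) = 30" "type_count 1 4 \<le> 1"
    and "be \<in> L" "dP be = 3" "dQ be = 1" "q \<in> Q" "q \<in> F be"
  obtains c b4 where "c \<in> L" "dQ c = 3" "q \<in> F c" "b4 \<in> L" "dP b4 = 1" "dQ b4 = 4" "q \<in> F b4"
proof -
  define R where "R = through q - {be}"
  have R_L: "R \<subseteq> L" and finite_R: "finite R"
    by (auto simp: R_def blocks_through_def)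
  have "be \<in> through q"
    using assms(4,8) by (simp add: blocks_through_def)
  then have split: "sum f (through q) = f be + sum f R" for f :: "'b \<Rightarrow> nat"
    unfolding R_def by (simp add: sum.remove)
  have sum_dP_R: "sum dP R = 2"
    using through_Q_dP_if_tight[OF _ assms(7)] assms(1,5) card_P card_Q split[of dP] by simp
  have "(\<Sum>b\<in>R. dQ b - 1) = 5"
    using through_Q_dQ_if_tight[OF _ assms(7)] assms(2,6) card_Q split[of "\<lambda>b. dQ b - 1"] by simp
  define R3 where "R3 = {b\<in>R. dQ b = 3}"
  define R4 where "R4 = {b\<in>R. dQ b = 4}"
  have "dQ b - 1 \<le> dP b + (if dQ b = 3 then 1 else 0) + (if dQ b = 4 then 2 else 0)" if "b \<in> R" for b
    using that R_L dP_pos[of b] dQ_le_4[of b] dQ_le_2_if_dP_ge_2[of b] by (cases "dP b = 1") auto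
  then have "(\<Sum>b\<in>R. dQ b - 1)
      \<le> (\<Sum>b\<in>R. dP b + (if dQ b = 3 then 1 else 0) + (if dQ b = 4 then 2 else 0))"
    by (rule sum_mono)
  also have "\<dots> = sum dP R + card R3 + 2 * card R4"
    using finite_R by (simp add: R3_def R4_def sum.distrib sum.If_cases Int_def mult.commute)
  moreover have R4_le: "card R4 \<le> 1"
  proof -
    have "R4 \<subseteq> {b\<in>L. dP b = 1 \<and> dQ b = 4}"
      using R_L dQ_le_2_if_dP_ge_2 dP_pos by (fastforce simp: R4_def)
    then show ?thesis
      using assms(3) card_mono[of "{b\<in>L. dP b = 1 \<and> dQ b = 4}" R4] by (simp add: type_count_def)
  qed
  moreover have "card R3 + card R4 \<le> sum dP R"
  proof -
    have "card R3 + card R4 = card (R3 \<union> R4)"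
      using finite_R by (intro card_Un_disjoint[symmetric]) (auto simp: R3_def R4_def)
    also have "\<dots> \<le> card R"
      using finite_R by (intro card_mono) (auto simp: R3_def R4_def)
    finally show ?thesis
      using card_le_sum_dP[OF R_L] by linarith
  qed
  ultimately have "card R4 = 1" "card R3 \<noteq> 0"
    using sum_dP_R \<open>(\<Sum>b\<in>R. dQ b - 1) = 5\<close> by linarith+
  then obtain c b4 where c: "c \<in> R3" and b4: "b4 \<in> R4"
    by (metis card.empty all_not_in_conv zero_neq_one)
  have "c \<in> L" "dQ c = 3" "q \<in> F c"
    using c R_L by (auto simp: R3_def R_def blocks_through_def)
  moreover have "b4 \<in> L" "dQ b4 = 4" "q \<in> F b4"
    using b4 R_L by (auto simp: R4_def R_def blocks_through_def)
  moreover have "dP b4 = 1"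
    using dQ_le_2_if_dP_ge_2[of b4] dP_pos[of b4] calculation by fastforce
  ultimately show ?thesis
    using that by blast
qed

text \<open>
  The blocks c1, c2 of type (1, 3) through q1, q2 both meet Q outside q_i exactly in the two
  points missed by the block of type (1, 4); so c1 = c2, which then shares q1 and q2 with it.
\<close>
lemma no_tight_profile_with_one_1_4_block:
  assumes "(\<Sum>b\<in>L. dP b * dQ b) = 30" "(\<Sum>b\<in>L. dQ b * (dQ b - 1)) = 30" "type_count 1 4 = 1"
  shows False
proof -
  obtain b1 b2 v q1 q2 where b: "b1 \<in> L" "b2 \<in> L" "dP b1 = 3" "dQ b1 = 1" "dP b2 = 3" "dQ b2 = 1"
    and q: "F b1 \<inter> Q = {q1}" "F b2 \<inter> Q = {q2}" "q1 \<noteq> q2"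
    using blocks_of_type_3_1 by metis
  have q1: "q1 \<in> Q" "q1 \<in> F b1" and q2: "q2 \<in> Q" "q2 \<in> F b2"
    using q by auto
  have "type_count 1 4 \<le> 1"
    using assms(3) by simp
  obtain c1 b4 where c1: "c1 \<in> L" "dQ c1 = 3" "q1 \<in> F c1"
    and b4: "b4 \<in> L" "dP b4 = 1" "dQ b4 = 4" "q1 \<in> F b4"
    using point_of_3_1_block_on_1_3_and_1_4_blocks[OF assms(1,2) \<open>type_count 1 4 \<le> 1\<close> b(1,3,4) q1] .
  obtain c2 b4' where c2: "c2 \<in> L" "dQ c2 = 3" "q2 \<in> F c2"
    and b4': "b4' \<in> L" "dP b4' = 1" "dQ b4' = 4" "q2 \<in> F b4'"
    using point_of_3_1_block_on_1_3_and_1_4_blocks[OF assms(1,2) \<open>type_count 1 4 \<le> 1\<close> b(2,5,6) q2] .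
  have "b4' = b4"
  proof -
    obtain x where "{b\<in>L. dP b = 1 \<and> dQ b = 4} = {x}"
      using assms(3) unfolding type_count_def by (auto simp: card_1_singleton_iff)
    moreover have "b4 \<in> {b\<in>L. dP b = 1 \<and> dQ b = 4}" "b4' \<in> {b\<in>L. dP b = 1 \<and> dQ b = 4}"
      using b4 b4' by simp_all
    ultimately show ?thesis
      by simp
  qed
  define D where "D = Q - F b4"
  have "card D = 2"
    using b4(3) card_Q by (simp add: D_def dQ_def card_Diff_subset_Int Int_commute)
  then obtain d1 d2 where D: "D = {d1, d2}" "d1 \<noteq> d2"
    by (auto simp: card_2_iff)
  have "c1 \<noteq> b4" "c2 \<noteq> b4"
    using c1(2) c2(2) b4(3) by auto
  have "F c1 \<inter> Q - {q1} = D"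
    unfolding D_def using Q_part_eq_complement[OF c1(1) b4(1) \<open>c1 \<noteq> b4\<close> c1(3) b4(4) q1(1)]
    by (simp add: c1(2) b4(3) card_Q)
  moreover have "F c2 \<inter> Q - {q2} = D"
    unfolding D_def using Q_part_eq_complement[OF c2(1) b4(1) \<open>c2 \<noteq> b4\<close> c2(3) _ q2(1)] b4'(4)
    by (simp add: c2(2) b4(3) card_Q \<open>b4' = b4\<close>)
  ultimately have "c1 = c2"
    using partial_linear_spaceD[OF partial_linear c1(1) c2(1), of d1 d2] D by blast
  then have "c1 = b4"
    using partial_linear_spaceD[OF partial_linear c1(1) b4(1) q(3)] c1(3) c2(3) b4(4) b4'(4) \<open>b4' = b4\<close>
    by blast
  then show False
    using c1(2) b4(3) by simp
qed

lemma no_tight_configuration: False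
proof -
  consider
      (no_dQ_even) "type_count 1 2 = 0" "type_count 1 3 = 5" "type_count 1 4 = 0"
        "type_count 2 1 = 4" "type_count 2 2 = 0"
    | (one_1_2_block) "type_count 1 2 = 1" "type_count 1 3 = 4" "type_count 1 4 = 0"
        "type_count 2 1 = 3" "type_count 2 2 = 1"
    | (one_1_4_block) "type_count 1 2 = 2" "type_count 1 3 = 2" "type_count 1 4 = 1"
        "type_count 2 1 = 3" "type_count 2 2 = 1"
    using type_profiles by fastforce
  then show False
  proof cases
    case no_dQ_even
    have "odd (dQ b)" if "b \<in> L" for b
      using type_count_pos[of b] dP_range[of b] dQ_range[of b] that type_count_zero no_dQ_even by auto
    moreover have "(\<Sum>b\<in>L. dQ b * (dQ b - 1)) = 30"
      using sum_by_types[of "\<lambda>_ j. j * (j - 1)"] type_count_zero type_count_3_1 no_dQ_even by simp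
    ultimately show False
      by (rule no_tight_profile_with_odd_dQ)
  next
    case one_1_2_block
    have "(\<Sum>b\<in>L. dP b * dQ b) = 30"
      using sum_by_types[of "\<lambda>i j. i * j"] type_count_zero type_count_3_1 one_1_2_block by simp
    with one_1_2_block show False
      by (intro no_tight_profile_with_one_1_2_block) simp_all
  next
    case one_1_4_block
    have "(\<Sum>b\<in>L. dP b * dQ b) = 30" "(\<Sum>b\<in>L. dQ b * (dQ b - 1)) = 30"
      using sum_by_types[of "\<lambda>i j. i * j"] sum_by_types[of "\<lambda>_ j. j * (j - 1)"]
        type_count_zero type_count_3_1 one_1_4_block by simp_all
    with one_1_4_block show False
      by (intro no_tight_profile_with_one_1_4_block)
  qed
qed

end

section \<open>Sizeable graphs\<close>

locale finite_sizeable =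
  fixes V :: "'a set" and E :: "'a \<Rightarrow> 'a \<Rightarrow> bool" and A B A0 A1 B0 B1 :: "'a set"
  assumes finite_V: "finite V"
    and simple: "simple_graph V E" and bipartite: "bipartite_on V E A B" and C4_free: "\<not> has_4_cycle E"
    and nonempty: "A0 \<noteq> {}" "A1 \<noteq> {}" "B0 \<noteq> {}" "B1 \<noteq> {}"
    and split_A: "A0 \<inter> A1 = {}" "A0 \<union> A1 = A"
    and split_B: "B0 \<inter> B1 = {}" "B0 \<union> B1 = B"
    and connected: "induced_connected E (A0 \<union> B0)" "induced_connected E (A0 \<union> B1)"
      "induced_connected E (A1 \<union> B0)" "induced_connected E (A1 \<union> B1)"
begin

lemma finite_A [simp]: "finite A" and finite_B [simp]: "finite B"
  using finite_V bipartite finite_subset unfolding bipartite_on_def by blast+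

lemma finite_parts [simp]: "finite A0" "finite A1" "finite B0" "finite B1"
  using finite_A finite_B split_A split_B by (metis finite_Un)+

lemma card_V: "card V = card A + card B"
  using bipartite card_Un_disjoint[OF finite_A finite_B] unfolding bipartite_on_def by simp

lemma card_A: "card A = card A0 + card A1" and card_B: "card B = card B0 + card B1"
  using split_A split_B card_Un_disjoint by (metis finite_parts)+

lemma partial_linear: "partial_linear_space X (neighbours E)"
  using C4_free_partial_linear_space[OF simple C4_free] .

lemma neighbours_meet_A0: "b \<in> B \<Longrightarrow> neighbours E b \<inter> A0 \<noteq> {}"
  and neighbours_meet_A1: "b \<in> B \<Longrightarrow> neighbours E b \<inter> A1 \<noteq> {}"
  using bipartite_connected_neighbour[OF bipartite _ _ _ connected(1)]
    bipartite_connected_neighbour[OF bipartite _ _ _ connected(2)]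
    bipartite_connected_neighbour[OF bipartite _ _ _ connected(3)]
    bipartite_connected_neighbour[OF bipartite _ _ _ connected(4)]
    nonempty split_A split_B by blast+

lemma degree_sum_part_ge:
  assumes "X \<subseteq> A" "induced_connected E (X \<union> B0)" "induced_connected E (X \<union> B1)"
  shows "2 * card X + card B \<le> (\<Sum>b\<in>B. card (neighbours E b \<inter> X)) + 2"
proof -
  have "finite X"
    using assms(1) finite_A finite_subset by blast
  then have "card X + card B0 - 1 \<le> (\<Sum>b\<in>B0. card (neighbours E b \<inter> X))"
    "card X + card B1 - 1 \<le> (\<Sum>b\<in>B1. card (neighbours E b \<inter> X))"
    using bipartite_connected_degree_sum_ge[OF simple bipartite assms(1)] assms(2,3) split_B
    by auto
  moreover have "(\<Sum>b\<in>B. card (neighbours E b \<inter> X))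
      = (\<Sum>b\<in>B0. card (neighbours E b \<inter> X)) + (\<Sum>b\<in>B1. card (neighbours E b \<inter> X))"
    using split_B by (simp flip: sum.union_disjoint)
  moreover have "card B0 \<noteq> 0" "card B1 \<noteq> 0"
    using nonempty by auto
  ultimately show ?thesis
    using card_B by linarith
qed

lemma degree_sum_ge: "2 * card V \<le> (\<Sum>b\<in>B. card (neighbours E b \<inter> A)) + 4"
proof -
  have "card (neighbours E b \<inter> A) = card (neighbours E b \<inter> A0) + card (neighbours E b \<inter> A1)" for b
  proof -
    have "neighbours E b \<inter> A = neighbours E b \<inter> A0 \<union> neighbours E b \<inter> A1"
      using split_A by blast
    then show ?thesis
      using split_A by (simp add: card_Un_disjoint disjoint_iff)
  qed
  then have "(\<Sum>b\<in>B. card (neighbours E b \<inter> A))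
      = (\<Sum>b\<in>B. card (neighbours E b \<inter> A0)) + (\<Sum>b\<in>B. card (neighbours E b \<inter> A1))"
    by (simp add: sum.distrib)
  then show ?thesis
    using degree_sum_part_ge[of A0] degree_sum_part_ge[of A1] connected split_A card_A card_V by auto
qed

lemma degree_sum_swap: "(\<Sum>a\<in>A. card (neighbours E a \<inter> B)) = (\<Sum>b\<in>B. card (neighbours E b \<inter> A))"
proof -
  have "blocks_through B (neighbours E) a = neighbours E a \<inter> B" for a
    using simple unfolding simple_graph_def blocks_through_def by blast
  then show ?thesis
    using sum_blocks_through_eq[OF finite_A finite_B, where F = "neighbours E" and g = "\<lambda>_. 1"] by simp
qed

lemma card_A_B_eq_11:
  assumes "card V \<le> 22"
  shows "card A = 11 \<and> card B = 11"
proof -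
  define e where "e = (\<Sum>b\<in>B. card (neighbours E b \<inter> A))"
  define c where "c = 2 * (card A + card B) - 4"
  have "1 \<le> card A0" "1 \<le> card A1" "1 \<le> card B0" "1 \<le> card B1"
    using nonempty by (simp_all add: Suc_le_eq card_gt_0_iff)
  then have "card B \<le> c" "card A \<le> c"
    using card_A card_B by (simp_all add: c_def)
  have "c \<le> e"
    using degree_sum_ge card_V by (simp add: c_def e_def)
  have "e * e \<le> card B * (card A * (card A - 1) + e)"
    using sum_blocks_squared_le[OF partial_linear finite_B finite_A] by (simp add: e_def power2_eq_square)
  then have "c * c \<le> card B * (card A * (card A - 1) + c)"
    using square_le_mult_add_mono \<open>c \<le> e\<close> \<open>card B \<le> c\<close> by blast
  moreover have "e * e \<le> card A * (card B * (card B - 1) + e)"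
    using sum_blocks_squared_le[OF partial_linear finite_A finite_B] degree_sum_swap
    by (simp add: e_def power2_eq_square)
  then have "c * c \<le> card A * (card B * (card B - 1) + c)"
    using square_le_mult_add_mono \<open>c \<le> e\<close> \<open>card A \<le> c\<close> by blast
  ultimately show ?thesis
    using eleven_eleven_if_square_bounds[of "card A" "card B"] \<open>card B \<le> c\<close> \<open>card A \<le> c\<close> assms card_V
      card_A card_B \<open>1 \<le> card A0\<close> \<open>1 \<le> card A1\<close> \<open>1 \<le> card B0\<close> \<open>1 \<le> card B1\<close>
    by (simp add: c_def power2_eq_square)
qed

lemma card_A0_A1:
  assumes "card A = 11" "card B = 11"
  shows "card A0 = 5 \<and> card A1 = 6 \<or> card A0 = 6 \<and> card A1 = 5"
proof -
  let ?d0 = "\<lambda>b. card (neighbours E b \<inter> A0)" and ?d1 = "\<lambda>b. card (neighbours E b \<inter> A1)"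
  have "2 * card A0 + card B \<le> sum ?d0 B + 2" "2 * card A1 + card B \<le> sum ?d1 B + 2"
    using degree_sum_part_ge[of A0] degree_sum_part_ge[of A1] connected split_A by auto
  moreover have "?d0 b + ?d1 b \<le> ?d0 b * ?d1 b + 1" if "b \<in> B" for b
    using pred_mult_pred_eq[of "?d0 b" "?d1 b"] neighbours_meet_A0[OF that] neighbours_meet_A1[OF that]
    by (simp add: Suc_le_eq card_gt_0_iff)
  then have "(\<Sum>b\<in>B. ?d0 b + ?d1 b) \<le> (\<Sum>b\<in>B. ?d0 b * ?d1 b + 1)"
    by (rule sum_mono)
  then have "sum ?d0 B + sum ?d1 B \<le> (\<Sum>b\<in>B. ?d0 b * ?d1 b) + card B"
    by (simp only: sum.distrib card_eq_sum)
  moreover have "(\<Sum>b\<in>B. ?d0 b * ?d1 b) \<le> card A0 * card A1"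
    using sum_cross_pairs_in_blocks_le[OF partial_linear finite_B finite_parts(1,2) split_A(1)] .
  ultimately have "29 \<le> card A0 * card A1"
    using assms card_A by linarith
  then show ?thesis
    using five_six_if_mult_ge_29 assms(1) card_A by simp
qed

lemma tight_configuration_of_parts:
  assumes "card A = 11" "card B = 11" "X = A0 \<and> Y = A1 \<or> X = A1 \<and> Y = A0" "card X = 5" "card Y = 6"
  shows "tight_configuration X Y B (neighbours E)"
proof -
  have "X \<inter> Y = {}"
    using assms(3) split_A by auto
  moreover have "2 * card X + card B \<le> (\<Sum>b\<in>B. card (neighbours E b \<inter> X)) + 2"
      "2 * card Y + card B \<le> (\<Sum>b\<in>B. card (neighbours E b \<inter> Y)) + 2"
    using assms(3) degree_sum_part_ge[of A0] degree_sum_part_ge[of A1] connected split_A by auto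
  moreover have "b \<in> B \<Longrightarrow> neighbours E b \<inter> X \<noteq> {}" "b \<in> B \<Longrightarrow> neighbours E b \<inter> Y \<noteq> {}" for b
    using assms(3) neighbours_meet_A0 neighbours_meet_A1 by auto
  moreover have "finite X" "finite Y"
    using assms(3) by auto
  ultimately show ?thesis
    using assms partial_linear
    by unfold_locales simp_all
qed

lemma card_V_ge_23: "23 \<le> card V"
proof (rule ccontr)
  assume "\<not> 23 \<le> card V"
  then have "card A = 11" "card B = 11"
    using card_A_B_eq_11 by simp_all
  moreover obtain X Y where "X = A0 \<and> Y = A1 \<or> X = A1 \<and> Y = A0" "card X = 5" "card Y = 6"
    using card_A0_A1[OF calculation] by blast
  ultimately show False
    using tight_configuration.no_tight_configuration tight_configuration_of_parts by blast
qed

end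

theorem mainTheorem15:
  fixes V :: "'a set" and E :: "'a \<Rightarrow> 'a \<Rightarrow> bool"
  assumes "sizeable V E"
  shows "infinite V \<or> 23 \<le> card V"
proof (cases "finite V")
  case True
  from assms obtain A B A0 A1 B0 B1 where "finite_sizeable V E A B A0 A1 B0 B1"
    unfolding sizeable_def finite_sizeable_def using True by blast
  then show ?thesis
    using finite_sizeable.card_V_ge_23 by blast
qed simp

end
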